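(* Let $\mathfrak l$ be any Lagrangian subalgebra of $\mathfrak d$, regarded as a point of $\mathrm{Gr}(n,\mathfrak d)$. Then the Schouten bracket of $\Pi$ with itself vanishes at $\mathfrak l$: $[\Pi,\Pi](\mathfrak l)=0$.
   Context: Let $(\mathfrak u,\mathfrak u^* )$ be a finite-dimensional real Lie bialgebra, $n=\dim\mathfrak u$, and let $\mathfrak d=\mathfrak u\bowtie\mathfrak u^*$ be its double: the vector space $\mathfrak u\oplus\mathfrak u^*$ with the symmetric nondegenerate form $\langle x+\xi,y+\eta\rangle=(x,\eta)+(y,\xi)$ ($x,y\in\mathfrak u$, $\xi,\eta\in\mathfrak u^*$, $(\cdot,\cdot)$ the natural pairing), equipped with the unique Lie bracket for which $\langle\,,\rangle$ is ad-invariant and $\mathfrak u$, $\mathfrak u^*$ are subalgebras. A Lagrangian subalgebra of $\mathfrak d$ is a Lie subalgebra $\mathfrak l$ with $\dim\mathfrak l=n$ and $\langle a,b\rangle=0$ for all $a,b\in\mathfrak l$. $\mathrm{Gr}(n,\mathfrak d)$ is the Grassmannian of $n$-dimensional subspaces of $\mathfrak d$. Let $D$ be the adjoint group of $\mathfrak d$, acting on $\mathrm{Gr}(n,\mathfrak d)$, and let $\kappa:\mathfrak d\to\chi^1(\mathrm{Gr}(n,\mathfrak d))$ be the induced Lie algebra anti-homomorphism into vector fields, extended multilinearly to $\kappa:\wedge^k\mathfrak d\to\chi^k(\mathrm{Gr}(n,\mathfrak d))$. Identify $\mathfrak d^*\cong\mathfrak u^*\oplus\mathfrak u$ and define $R\in\wedge^2\mathfrak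 d$ by $R(\xi_1+x_1,\xi_2+x_2)=(\xi_2,x_1)-(\xi_1,x_2)$; equivalently $R=\sum_i\eta_i\wedge e_i$ for a basis $\{e_i\}$ of $\mathfrak u$ and dual basis $\{\eta_i\}$ of $\mathfrak u^*$. Define the bivector field $\Pi=\tfrac12\kappa(R)$ on $\mathrm{Gr}(n,\mathfrak d)$. *)

theory Defs
  imports "HOL-Analysis.Analysis"
begin

text \<open>The Lie bialgebra u is modelled as u = real^'n (n = CARD('n)), its dual
u* as real^'n paired via the dot product, and the double d = u \<oplus> u* as the
product type real^'n \<times> real^'n.\<close>

type_synonym 'n dbl = "(real^'n::finite) \<times> (real^'n)"

definition pair_form :: "('n::finite) dbl \<Rightarrow> 'n dbl \<Rightarrow> real" where
  "pair_form a b = fst a \<bullet> snd b + fst b \<bullet> snd a"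

text \<open>B is the bracket of the double of a Lie bialgebra (u,u*): a Lie bracket on
u \<oplus> u* for which the form is ad-invariant and u, u* are subalgebras.
(Such a bracket is unique, and exists exactly when (u,u*) is a Lie bialgebra.)\<close>
definition manin_double :: "(('n::finite) dbl \<Rightarrow> 'n dbl \<Rightarrow> 'n dbl) \<Rightarrow> bool" where
  "manin_double B \<longleftrightarrow>
     bilinear B \<and>
     (\<forall>a b. B a b = - B b a) \<and>
     (\<forall>a b c. B a (B b c) + B b (B c a) + B c (B a b) = 0) \<and>
     (\<forall>a b c. pair_form (B a b) c = pair_form a (B b c)) \<and>
     (\<forall>x y. snd (B (x, 0) (y, 0)) = 0) \<and>
     (\<forall>\<xi> \<eta>. fst (B (0, \<xi>) (0, \<eta>)) = 0)"

definition lagrangian_subalgebra :: "(('n::finite) dbl \<Rightarrow> 'n dbl \<Rightarrow> 'n dbl) \<Rightarrow> 'n dbl set \<Rightarrow> bool" where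
  "lagrangian_subalgebra B L \<longleftrightarrow>
     subspace L \<and> dim L = CARD('n) \<and>
     (\<forall>a\<in>L. \<forall>b\<in>L. pair_form a b = 0) \<and>
     (\<forall>a\<in>L. \<forall>b\<in>L. B a b \<in> L)"

text \<open>A standard affine chart of Gr(n,d) centred at L: T is a linear automorphism of d
mapping u \<oplus> 0 onto L; the matrix X :: real^'n^'n corresponds to the n-plane
T(graph X) = T ` {(x, X x)}; X = 0 corresponds to L.\<close>
definition grass_chart :: "(('n::finite) dbl \<Rightarrow> 'n dbl) \<Rightarrow> 'n dbl set \<Rightarrow> bool" where
  "grass_chart T L \<longleftrightarrow> linear T \<and> bij T \<and> T ` {(x, 0) | x. True} = L"

definition chart_point :: "(('n::finite) dbl \<Rightarrow> 'n dbl) \<Rightarrow> real^'n^'n \<Rightarrow> 'n dbl set" where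
  "chart_point T X = T ` {(x, X *v x) | x. True}"

text \<open>The infinitesimal generator kappa(z) of the adjoint action, expressed in the chart:
if w = [z, T(x, X x)] and inv T w = (w1, w2), the velocity of the graph is
x \<mapsto> w2 - X w1.\<close>
definition kappa_chart :: "(('n::finite) dbl \<Rightarrow> 'n dbl \<Rightarrow> 'n dbl) \<Rightarrow> (('n::finite) dbl \<Rightarrow> 'n dbl)
    \<Rightarrow> 'n dbl \<Rightarrow> real^'n^'n \<Rightarrow> real^'n^'n" where
  "kappa_chart B T z X =
     (\<chi> i j. (let w = inv T (B z (T (axis j 1, X *v axis j 1)))
              in (snd w - X *v fst w) $ i))"

definition e_u :: "('n::finite) \<Rightarrow> 'n dbl" where "e_u i = (axis i 1, 0)"
definition eta_u :: "('n::finite) \<Rightarrow> 'n dbl" where "eta_u i = (0, axis i 1)"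

text \<open>Pi = 1/2 kappa(R), R = sum_i eta_i \<and> e_i, as a bivector field in the chart, evaluated
on covectors alpha, beta (identified with matrices via the inner product):
(V \<and> W)(alpha,beta) = alpha(V) beta(W) - alpha(W) beta(V).\<close>
definition Pi_chart :: "(('n::finite) dbl \<Rightarrow> 'n dbl \<Rightarrow> 'n dbl) \<Rightarrow> (('n::finite) dbl \<Rightarrow> 'n dbl)
    \<Rightarrow> real^'n^'n \<Rightarrow> real^'n^'n \<Rightarrow> real^'n^'n \<Rightarrow> real" where
  "Pi_chart B T X \<alpha> \<beta> = (1/2) * (\<Sum>i\<in>UNIV.
      (\<alpha> \<bullet> kappa_chart B T (eta_u i) X) * (\<beta> \<bullet> kappa_chart B T (e_u i) X)
    - (\<alpha> \<bullet> kappa_chart B T (e_u i) X) * (\<beta> \<bullet> kappa_chart B T (eta_u i) X))"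

text \<open>Schouten bracket of a bivector field P with itself on a Euclidean space, in linear
coordinates: [P,P]^{ijk} = 2 * cyclic sum of P^{il} d_l P^{jk}, evaluated on constant
covectors alpha, beta, gamma.\<close>
definition sharp :: "('a::euclidean_space \<Rightarrow> 'a \<Rightarrow> 'a \<Rightarrow> real) \<Rightarrow> 'a \<Rightarrow> 'a \<Rightarrow> 'a" where
  "sharp P p \<alpha> = (\<Sum>b\<in>Basis. P p \<alpha> b *\<^sub>R b)"

definition schouten_self :: "('a::euclidean_space \<Rightarrow> 'a \<Rightarrow> 'a \<Rightarrow> real) \<Rightarrow> 'a
    \<Rightarrow> 'a \<Rightarrow> 'a \<Rightarrow> 'a \<Rightarrow> real" where
  "schouten_self P p \<alpha> \<beta> \<gamma> = 2 *
     (frechet_derivative (\<lambda>q. P q \<beta> \<gamma>) (at p) (sharp P p \<alpha>)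
    + frechet_derivative (\<lambda>q. P q \<gamma> \<alpha>) (at p) (sharp P p \<beta>)
    + frechet_derivative (\<lambda>q. P q \<alpha> \<beta>) (at p) (sharp P p \<gamma>))"

end

theory Submission
  imports Defs
begin

text \<open>
  In the chart \<open>X \<mapsto> T (graph X)\<close> the generator \<open>\<kappa>(z)\<close> is the Riccati field
  \<open>C + D X - X A - X P X\<close>, where \<open>[[A, P], [C, D]]\<close> is the block matrix of
  \<open>inv T \<circ> ad z \<circ> T\<close>. At \<open>X = 0\<close> the bracket \<open>[\<Pi>,\<Pi>]\<close> therefore only involves the values
  \<open>\<kappa>(z)(0) = C\<close> and the derivatives \<open>H \<mapsto> D H - H A\<close>, and the Jacobi identity turns the
  combination that occurs into \<open>\<kappa>([z,w])(0)\<close>. Since \<open>L\<close> is a subalgebra it fixes the base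
  point, so every covector at \<open>L\<close>, pulled back along \<open>z \<mapsto> \<kappa>(z)(0)\<close>, is represented by an
  element of \<open>d\<close> orthogonal to \<open>L\<close>, i.e. by an element of \<open>L\<close> itself. Thus \<open>[\<Pi>,\<Pi>](L)\<close> is
  a cyclic sum of terms \<open>\<langle>a, [R b, R c]\<rangle>\<close> with \<open>a, b, c \<in> L\<close> and \<open>R (x, \<xi>) = (x, -\<xi>)\<close>.
  Splitting along \<open>u \<oplus> u*\<close>, this sum is a combination of \<open>\<langle>a, [b, c]\<rangle>\<close> and of the Cartan
  3-form on \<open>u\<close> and on \<open>u*\<close>, all of which vanish.
\<close>

lemma bilinear_matrix_matrix_mult:
  "bilinear ((**) :: real^'n^'m \<Rightarrow> real^'p^'n \<Rightarrow> real^'p^'m)"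
  by (auto simp: bilinear_def matrix_matrix_mult_def vec_eq_iff sum.distrib algebra_simps
      sum_distrib_left intro!: linearI)

lemma bounded_bilinear_matrix_matrix_mult:
  "bounded_bilinear ((**) :: real^'n^'m \<Rightarrow> real^'p^'n \<Rightarrow> real^'p^'m)"
  using bilinear_matrix_matrix_mult bilinear_conv_bounded_bilinear by blast

lemma has_derivative_riccati_at0:
  fixes A C D P :: "real^'n^'n"
  shows "((\<lambda>X. C + D ** X - X ** A - X ** (P ** X)) has_derivative (\<lambda>H. D ** H - H ** A))
    (at 0)"
proof -
  note mult = bounded_bilinear_matrix_matrix_mult
  have left: "((\<lambda>X. M ** X) has_derivative (\<lambda>H. M ** H)) (at 0)" for M :: "real^'n^'n"
    by (rule bounded_linear.has_derivative[OF bounded_bilinear.bounded_linear_right[OF mult]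
          has_derivative_ident])
  have right: "((\<lambda>X. X ** M) has_derivative (\<lambda>H. H ** M)) (at 0)" for M :: "real^'n^'n"
    by (rule bounded_linear.has_derivative[OF bounded_bilinear.bounded_linear_left[OF mult]
          has_derivative_ident])
  have quad: "((\<lambda>X. X ** (P ** X)) has_derivative (\<lambda>H. 0 ** (P ** H) + H ** (P ** 0))) (at 0)"
    by (rule bounded_bilinear.FDERIV[OF mult has_derivative_ident left])
  show ?thesis
    by (rule has_derivative_eq_rhs, (rule has_derivative_diff has_derivative_add has_derivative_const
          left right quad)+) simp
qed

lemma linear_matrix_family:
  assumes "\<And>x. linear (\<lambda>z. f z x)"
  shows "linear (\<lambda>z. matrix (f z :: real^'n \<Rightarrow> real^'m))"
  by (rule linearI) (simp_all add: matrix_def vec_eq_iff linear_add[OF assms] linear_scale[OF assms])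

lemma linear_block_maps:
  fixes f :: "'n::finite dbl \<Rightarrow> 'n dbl"
  assumes "linear f"
  shows "linear (\<lambda>x. fst (f (x, 0)))" "linear (\<lambda>y. fst (f (0, y)))"
    and "linear (\<lambda>x. snd (f (x, 0)))" "linear (\<lambda>y. snd (f (0, y)))"
  using linear_add[OF assms, of "(_, 0)" "(_, 0)"] linear_add[OF assms, of "(0, _)" "(0, _)"]
    linear_scale[OF assms, of _ "(_, 0)"] linear_scale[OF assms, of _ "(0, _)"]
  by (auto intro!: linearI)

definition block11 :: "('n::finite dbl \<Rightarrow> 'n dbl) \<Rightarrow> real^'n^'n"
  where "block11 f = matrix (\<lambda>x. fst (f (x, 0)))"
definition block12 :: "('n::finite dbl \<Rightarrow> 'n dbl) \<Rightarrow> real^'n^'n"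
  where "block12 f = matrix (\<lambda>y. fst (f (0, y)))"
definition block21 :: "('n::finite dbl \<Rightarrow> 'n dbl) \<Rightarrow> real^'n^'n"
  where "block21 f = matrix (\<lambda>x. snd (f (x, 0)))"
definition block22 :: "('n::finite dbl \<Rightarrow> 'n dbl) \<Rightarrow> real^'n^'n"
  where "block22 f = matrix (\<lambda>y. snd (f (0, y)))"

lemma linear_block_decomposition:
  assumes "linear f"
  shows "f (x, y) = (block11 f *v x + block12 f *v y, block21 f *v x + block22 f *v y)"
proof -
  have "f (x, y) = f (x, 0) + f (0, y)"
    using linear_add[OF assms, of "(x, 0)" "(0, y)"] by simp
  then show ?thesis
    by (simp add: block11_def block12_def block21_def block22_def prod_eq_iff
        matrix_works[unfolded linear_matrix_vector_mul_eq] linear_block_maps[OF assms])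
qed

lemma bilinear_pair_form: "bilinear pair_form"
  by (auto simp: bilinear_def pair_form_def inner_add inner_scaleR algebra_simps intro!: linearI)

lemma pair_form_commute: "pair_form a b = pair_form b a"
  by (simp add: pair_form_def inner_commute add.commute)

lemma mem_lagrangian_if_orthogonal:
  fixes L :: "'n::finite dbl set"
  assumes "subspace L" and "dim L = CARD('n)"
    and "\<forall>a\<in>L. \<forall>b\<in>L. pair_form a b = 0" and "\<forall>l\<in>L. pair_form p l = 0"
  shows "p \<in> L"
proof -
  define swap where "swap q = (snd q, fst q)" for q :: "'n dbl"
  have "linear swap" unfolding swap_def by (rule linearI) auto
  have "inj swap" unfolding swap_def inj_def by auto
  have pair_form_swap: "pair_form q l = swap l \<bullet> q" for q l
    by (simp add: swap_def pair_form_def inner_prod_def inner_commute)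
  define perp where "perp = {q. \<forall>x\<in>swap ` L. orthogonal x q}"
  have "subspace (swap ` L)"
    using \<open>linear swap\<close> \<open>subspace L\<close> by (rule linear_subspace_image)
  then have "dim perp + dim (swap ` L) = dim (UNIV :: 'n dbl set)"
    unfolding perp_def using dim_subspace_orthogonal_to_vectors[of "swap ` L" UNIV] by simp
  moreover have "dim (swap ` L) = dim L"
    using dim_image_eq[OF \<open>linear swap\<close>] \<open>inj swap\<close> by (metis inj_on_subset subset_UNIV)
  ultimately have "dim perp = dim L"
    using assms(2) by simp
  moreover have "subspace perp"
    unfolding perp_def by (rule subspace_orthogonal_to_vectors)
  moreover have "L \<subseteq> perp"
    using assms(3) by (auto simp: perp_def orthogonal_def pair_form_swap)
  ultimately have "L = perp"
    using subspace_dim_equal[OF assms(1)] by simp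
  moreover have "p \<in> perp"
    using assms(4) by (auto simp: perp_def orthogonal_def pair_form_swap)
  ultimately show ?thesis by simp
qed

definition cartan3 :: "('n::finite dbl \<Rightarrow> 'n dbl \<Rightarrow> 'n dbl) \<Rightarrow> 'n dbl \<Rightarrow> 'n dbl \<Rightarrow> 'n dbl
    \<Rightarrow> real"
  where "cartan3 B x y z = pair_form x (B y z)"

text \<open>The bivector \<open>R\<close> as a map from covectors to \<open>d\<close>, covectors being identified with
  elements of \<open>d\<close> through \<open>pair_form\<close>.\<close>
definition reflect_dual :: "'n::finite dbl \<Rightarrow> 'n dbl"
  where "reflect_dual q = (fst q, - snd q)"

locale lie_double =
  fixes B :: "'n::finite dbl \<Rightarrow> 'n dbl \<Rightarrow> 'n dbl"
  assumes manin_double: "manin_double B"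
begin

lemma bilinear_B: "bilinear B"
  and antisym_B: "B a b = - B b a"
  and jacobi_B: "B a (B b c) + B b (B c a) + B c (B a b) = 0"
  and pair_form_invariant: "pair_form (B a b) c = pair_form a (B b c)"
  and u_subalgebra: "snd (B (x, 0) (y, 0)) = 0"
  and u_dual_subalgebra: "fst (B (0, \<xi>) (0, \<eta>)) = 0"
  using manin_double unfolding manin_double_def by blast+

lemma ad_bracket: "B (B z w) c = B z (B w c) - B w (B z c)"
  using jacobi_B[of z w c] antisym_B[of c z] antisym_B[of c "B z w"] bilinear_rneg[OF bilinear_B]
  by (simp add: algebra_simps)

lemma cartan3_cyclic: "cartan3 B x y z = cartan3 B y z x"
  unfolding cartan3_def by (metis pair_form_invariant pair_form_commute)

lemma cartan3_antisym: "cartan3 B x y z = - cartan3 B x z y"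
  unfolding cartan3_def by (metis antisym_B bilinear_rneg[OF bilinear_pair_form])

lemma cartan3_add:
  "cartan3 B (a + b) y z = cartan3 B a y z + cartan3 B b y z"
  "cartan3 B x (a + b) z = cartan3 B x a z + cartan3 B x b z"
  "cartan3 B x y (a + b) = cartan3 B x y a + cartan3 B x y b"
  and cartan3_diff:
  "cartan3 B (a - b) y z = cartan3 B a y z - cartan3 B b y z"
  "cartan3 B x (a - b) z = cartan3 B x a z - cartan3 B x b z"
  "cartan3 B x y (a - b) = cartan3 B x y a - cartan3 B x y b"
  unfolding cartan3_def
  by (simp_all add: bilinear_ladd[OF bilinear_pair_form] bilinear_radd[OF bilinear_pair_form]
      bilinear_lsub[OF bilinear_pair_form] bilinear_rsub[OF bilinear_pair_form]
      bilinear_ladd[OF bilinear_B] bilinear_radd[OF bilinear_B]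
      bilinear_lsub[OF bilinear_B] bilinear_rsub[OF bilinear_B])

lemma cartan3_u: "cartan3 B (x, 0) (y, 0) (z, 0) = 0"
  and cartan3_u_dual: "cartan3 B (0, \<xi>) (0, \<eta>) (0, \<zeta>) = 0"
  unfolding cartan3_def pair_form_def using u_subalgebra[of y z] u_dual_subalgebra[of \<eta> \<zeta>]
  by simp_all

lemma cartan3_reflect_cyclic:
  assumes "lagrangian_subalgebra B L" and "a \<in> L" "b \<in> L" "c \<in> L"
  shows "cartan3 B a (reflect_dual b) (reflect_dual c)
    + cartan3 B b (reflect_dual c) (reflect_dual a) + cartan3 B c (reflect_dual a) (reflect_dual b) = 0"
proof -
  have split: "q = (fst q, 0) + (0, snd q)" "reflect_dual q = (fst q, 0) - (0, snd q)"
    for q :: "'n dbl"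
    by (simp_all add: reflect_dual_def)
  obtain a1 a2 b1 b2 c1 c2 where
    a: "a = (a1, 0) + (0, a2)" "reflect_dual a = (a1, 0) - (0, a2)" and
    b: "b = (b1, 0) + (0, b2)" "reflect_dual b = (b1, 0) - (0, b2)" and
    c: "c = (c1, 0) + (0, c2)" "reflect_dual c = (c1, 0) - (0, c2)"
    using split by blast
  have "cartan3 B a b c = 0"
    using assms unfolding lagrangian_subalgebra_def cartan3_def by blast
  \<comment> \<open>expanded, the left-hand side below is \<open>4 \<langle>a1, [b1, c1]\<rangle> + 4 \<langle>a2, [b2, c2]\<rangle> - \<langle>a, [b, c]\<rangle>\<close>\<close>
  then have "cartan3 B (reflect_dual a) (reflect_dual b) c
      + cartan3 B (reflect_dual a) b (reflect_dual c) + cartan3 B a (reflect_dual b) (reflect_dual c) = 0"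
    unfolding a(2) b(2) c(2) unfolding a(1) b(1) c(1)
    by (simp only: cartan3_add cartan3_diff cartan3_u cartan3_u_dual)
  then show ?thesis
    using cartan3_cyclic[of "reflect_dual a" b "reflect_dual c"]
      cartan3_cyclic[of c "reflect_dual a" "reflect_dual b"]
    by linarith
qed

end

definition ad_chart :: "('n::finite dbl \<Rightarrow> 'n dbl \<Rightarrow> 'n dbl) \<Rightarrow> ('n dbl \<Rightarrow> 'n dbl)
    \<Rightarrow> 'n dbl \<Rightarrow> 'n dbl \<Rightarrow> 'n dbl"
  where "ad_chart B T z p = inv T (B z (T p))"

definition kappa_deriv0 :: "('n::finite dbl \<Rightarrow> 'n dbl \<Rightarrow> 'n dbl) \<Rightarrow> ('n dbl \<Rightarrow> 'n dbl)
    \<Rightarrow> 'n dbl \<Rightarrow> real^'n^'n \<Rightarrow> real^'n^'n"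
  where "kappa_deriv0 B T z H = block22 (ad_chart B T z) ** H - H ** block11 (ad_chart B T z)"

definition kappa_dual :: "('n::finite dbl \<Rightarrow> 'n dbl \<Rightarrow> 'n dbl) \<Rightarrow> ('n dbl \<Rightarrow> 'n dbl)
    \<Rightarrow> real^'n^'n \<Rightarrow> 'n dbl"
  where "kappa_dual B T v =
    ((\<chi> i. v \<bullet> kappa_chart B T (eta_u i) 0), (\<chi> i. v \<bullet> kappa_chart B T (e_u i) 0))"

lemma sum_e_u_eta_u:
  "(\<Sum>i\<in>UNIV. c i *\<^sub>R e_u i + d i *\<^sub>R eta_u i) = ((\<chi> i. c i), (\<chi> i. d i))"
  by (simp add: e_u_def eta_u_def prod_eq_iff fst_sum snd_sum sum.distrib vec_eq_iff sum_component
      axis_def mult_delta_right)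

locale double_chart = lie_double B for B :: "'n::finite dbl \<Rightarrow> 'n dbl \<Rightarrow> 'n dbl" +
  fixes T :: "'n dbl \<Rightarrow> 'n dbl"
  assumes linear_T: "linear T" and bij_T: "bij T"
begin

lemma linear_inv_T: "linear (inv T)"
  using linear_T bij_T by (simp add: bij_is_inj inj_linear_imp_inv_linear)

lemma inv_T_T [simp]: "inv T (T p) = p"
  using bij_T by (simp add: bij_is_inj)

lemma T_inv_T [simp]: "T (inv T p) = p"
  using bij_T by (simp add: bij_is_surj surj_f_inv_f)

lemma linear_ad_chart: "linear (ad_chart B T z)"
  unfolding ad_chart_def
  using linear_compose[OF linear_T linear_compose[OF
        bilinear_B[unfolded bilinear_def, THEN conjunct1, rule_format] linear_inv_T]]
  by (simp add: o_def)

lemma linear_ad_chart_left: "linear (\<lambda>z. ad_chart B T z p)"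
  unfolding ad_chart_def
  using linear_compose[OF bilinear_B[unfolded bilinear_def, THEN conjunct2, rule_format]
      linear_inv_T]
  by (simp add: o_def)

lemma ad_chart_bracket:
  "ad_chart B T (B z w) p
     = ad_chart B T z (ad_chart B T w p) - ad_chart B T w (ad_chart B T z p)"
  unfolding ad_chart_def by (simp add: ad_bracket linear_diff[OF linear_inv_T])

lemma kappa_chart_riccati:
  "kappa_chart B T z X = block21 (ad_chart B T z) + block22 (ad_chart B T z) ** X
     - X ** block11 (ad_chart B T z) - X ** (block12 (ad_chart B T z) ** X)" (is "_ = ?R")
proof -
  have "kappa_chart B T z X $ i $ j = ?R $ i $ j" for i j
  proof -
    have "kappa_chart B T z X $ i $ j = (snd (ad_chart B T z (axis j 1, X *v axis j 1))
        - X *v fst (ad_chart B T z (axis j 1, X *v axis j 1))) $ i"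
      by (simp add: kappa_chart_def ad_chart_def Let_def)
    also have "\<dots> = (?R *v axis j 1) $ i"
      by (simp add: linear_block_decomposition[OF linear_ad_chart] algebra_simps
          matrix_vector_mul_assoc)
    finally show ?thesis
      by (simp add: matrix_vector_mult_basis column_def)
  qed
  then show ?thesis
    by (simp add: vec_eq_iff)
qed

lemma kappa_chart_at0: "kappa_chart B T z 0 = block21 (ad_chart B T z)"
  by (simp add: kappa_chart_riccati)

lemma has_derivative_kappa_chart: "(kappa_chart B T z has_derivative kappa_deriv0 B T z) (at 0)"
proof -
  have "kappa_chart B T z = (\<lambda>X. block21 (ad_chart B T z) + block22 (ad_chart B T z) ** X
     - X ** block11 (ad_chart B T z) - X ** (block12 (ad_chart B T z) ** X))"
    by (simp add: fun_eq_iff kappa_chart_riccati)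
  moreover have "kappa_deriv0 B T z
      = (\<lambda>H. block22 (ad_chart B T z) ** H - H ** block11 (ad_chart B T z))"
    by (simp add: fun_eq_iff kappa_deriv0_def)
  ultimately show ?thesis
    using has_derivative_riccati_at0 by simp
qed

lemma linear_blocks_ad_chart:
  "linear (\<lambda>z. block11 (ad_chart B T z))" "linear (\<lambda>z. block21 (ad_chart B T z))"
  "linear (\<lambda>z. block22 (ad_chart B T z))"
  unfolding block11_def block21_def block22_def
  by (intro linear_matrix_family linear_compose[OF linear_ad_chart_left, unfolded o_def]
      linear_fst linear_snd)+

lemma linear_kappa_chart_at0: "linear (\<lambda>z. kappa_chart B T z 0)"
  unfolding kappa_chart_at0 by (rule linear_blocks_ad_chart)

lemma linear_kappa_deriv0: "linear (kappa_deriv0 B T z)"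
  unfolding kappa_deriv0_def
  by (rule linearI) (simp_all add: bilinear_radd[OF bilinear_matrix_matrix_mult]
      bilinear_ladd[OF bilinear_matrix_matrix_mult] bilinear_rmul[OF bilinear_matrix_matrix_mult]
      bilinear_lmul[OF bilinear_matrix_matrix_mult] algebra_simps)

lemma linear_kappa_deriv0_left: "linear (\<lambda>z. kappa_deriv0 B T z H)"
  unfolding kappa_deriv0_def
  by (rule linearI) (simp_all add: linear_add[OF linear_blocks_ad_chart(1)]
      linear_add[OF linear_blocks_ad_chart(3)] linear_scale[OF linear_blocks_ad_chart(1)]
      linear_scale[OF linear_blocks_ad_chart(3)]
      bilinear_radd[OF bilinear_matrix_matrix_mult] bilinear_ladd[OF bilinear_matrix_matrix_mult]
      bilinear_rmul[OF bilinear_matrix_matrix_mult] bilinear_lmul[OF bilinear_matrix_matrix_mult]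
      algebra_simps)

lemma kappa_deriv0_bracket:
  "kappa_deriv0 B T z (kappa_chart B T w 0) - kappa_deriv0 B T w (kappa_chart B T z 0)
     = kappa_chart B T (B z w) 0"
proof -
  have "(kappa_deriv0 B T z (kappa_chart B T w 0) - kappa_deriv0 B T w (kappa_chart B T z 0)) *v x
      = kappa_chart B T (B z w) 0 *v x" for x
  proof -
    have "kappa_chart B T (B z w) 0 *v x = snd (ad_chart B T (B z w) (x, 0))"
      by (simp add: kappa_chart_at0 linear_block_decomposition[OF linear_ad_chart])
    also have "\<dots> = snd (ad_chart B T z (ad_chart B T w (x, 0)))
        - snd (ad_chart B T w (ad_chart B T z (x, 0)))"
      by (simp add: ad_chart_bracket)
    also have "\<dots> = (kappa_deriv0 B T z (kappa_chart B T w 0)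
        - kappa_deriv0 B T w (kappa_chart B T z 0)) *v x"
      by (simp add: linear_block_decomposition[OF linear_ad_chart] kappa_chart_at0 kappa_deriv0_def
          algebra_simps matrix_vector_mul_assoc)
    finally show ?thesis by simp
  qed
  then show ?thesis
    by (simp add: matrix_eq)
qed

lemma inner_kappa_chart_at0: "v \<bullet> kappa_chart B T z 0 = pair_form (kappa_dual B T v) z"
proof -
  have "pair_form (kappa_dual B T v) z
      = (\<Sum>i\<in>UNIV. fst z $ i * (v \<bullet> kappa_chart B T (e_u i) 0)
          + snd z $ i * (v \<bullet> kappa_chart B T (eta_u i) 0))"
    by (simp add: pair_form_def kappa_dual_def inner_vec_def sum.distrib mult.commute add.commute)
  also have "\<dots> = v \<bullet> kappa_chart B T (\<Sum>i\<in>UNIV. fst z $ i *\<^sub>R e_u i + snd z $ i *\<^sub>R eta_u i) 0"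
    by (simp add: linear_sum[OF linear_kappa_chart_at0] linear_add[OF linear_kappa_chart_at0]
        linear_scale[OF linear_kappa_chart_at0] inner_sum_right inner_add_right)
  also have "\<dots> = v \<bullet> kappa_chart B T z 0"
    by (simp add: sum_e_u_eta_u)
  finally show ?thesis by simp
qed

lemma linear_sum_kappa_dual:
  assumes "linear f"
  shows "(\<Sum>i\<in>UNIV. (a \<bullet> kappa_chart B T (eta_u i) 0) *\<^sub>R f (e_u i)
      - (a \<bullet> kappa_chart B T (e_u i) 0) *\<^sub>R f (eta_u i))
    = f (reflect_dual (kappa_dual B T a))"
proof -
  have "reflect_dual (kappa_dual B T a) = (\<Sum>i\<in>UNIV. (a \<bullet> kappa_chart B T (eta_u i) 0) *\<^sub>R e_u i
      + (- (a \<bullet> kappa_chart B T (e_u i) 0)) *\<^sub>R eta_u i)"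
    unfolding sum_e_u_eta_u by (simp add: reflect_dual_def kappa_dual_def vec_eq_iff)
  then show ?thesis
    by (simp add: linear_sum[OF assms] linear_diff[OF assms] linear_scale[OF assms])
qed

lemma linear_inner_kappa_chart_at0: "linear (\<lambda>z. b \<bullet> kappa_chart B T z 0)"
  using linear_compose[OF linear_kappa_chart_at0 bounded_linear.linear[OF bounded_linear_inner_right]]
  by (simp add: o_def)

lemma linear_inner_kappa_deriv0_left: "linear (\<lambda>z. b \<bullet> kappa_deriv0 B T z H)"
  using linear_compose[OF linear_kappa_deriv0_left
      bounded_linear.linear[OF bounded_linear_inner_right]]
  by (simp add: o_def)

lemma sharp_Pi_chart_at0:
  "sharp (Pi_chart B T) 0 a = (1/2) *\<^sub>R kappa_chart B T (reflect_dual (kappa_dual B T a)) 0"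
proof -
  have "Pi_chart B T 0 a b
      = ((1/2) *\<^sub>R kappa_chart B T (reflect_dual (kappa_dual B T a)) 0) \<bullet> b" for b
    using linear_sum_kappa_dual[OF linear_inner_kappa_chart_at0, of a b]
    by (simp add: Pi_chart_def inner_commute)
  then show ?thesis
    unfolding sharp_def by (simp only: euclidean_representation)
qed

lemma has_derivative_Pi_chart:
  "((\<lambda>X. Pi_chart B T X a b) has_derivative
     (\<lambda>H. (b \<bullet> kappa_deriv0 B T (reflect_dual (kappa_dual B T a)) H
         - a \<bullet> kappa_deriv0 B T (reflect_dual (kappa_dual B T b)) H) / 2)) (at 0)"
  unfolding Pi_chart_def
  by (rule has_derivative_eq_rhs, (rule has_derivative_mult has_derivative_const has_derivative_sum
        has_derivative_diff has_derivative_inner_right has_derivative_kappa_chart)+)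
    (simp add: fun_eq_iff flip: linear_sum_kappa_dual[OF linear_inner_kappa_deriv0_left],
      simp add: algebra_simps flip: sum_subtractf sum.distrib)

lemma inner_kappa_deriv0_bracket:
  "v \<bullet> kappa_deriv0 B T z (kappa_chart B T w 0) - v \<bullet> kappa_deriv0 B T w (kappa_chart B T z 0)
     = cartan3 B (kappa_dual B T v) z w"
  unfolding inner_diff_right[symmetric] kappa_deriv0_bracket
  by (simp add: cartan3_def inner_kappa_chart_at0)

lemma schouten_Pi_chart_at0:
  defines "\<rho> v \<equiv> reflect_dual (kappa_dual B T v)"
  shows "schouten_self (Pi_chart B T) 0 a b c = - (cartan3 B (kappa_dual B T a) (\<rho> b) (\<rho> c)
    + cartan3 B (kappa_dual B T b) (\<rho> c) (\<rho> a) + cartan3 B (kappa_dual B T c) (\<rho> a) (\<rho> b)) / 2"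
proof -
  let ?K = "\<lambda>z. kappa_chart B T z 0" and ?dK = "kappa_deriv0 B T"
  have D: "frechet_derivative (\<lambda>X. Pi_chart B T X a b) (at 0)
      = (\<lambda>H. (b \<bullet> ?dK (\<rho> a) H - a \<bullet> ?dK (\<rho> b) H) / 2)" for a b
    unfolding \<rho>_def by (rule frechet_derivative_at[OF has_derivative_Pi_chart, symmetric])
  have "schouten_self (Pi_chart B T) 0 a b c
      = ((c \<bullet> ?dK (\<rho> b) (?K (\<rho> a)) - c \<bullet> ?dK (\<rho> a) (?K (\<rho> b)))
       + (a \<bullet> ?dK (\<rho> c) (?K (\<rho> b)) - a \<bullet> ?dK (\<rho> b) (?K (\<rho> c)))
       + (b \<bullet> ?dK (\<rho> a) (?K (\<rho> c)) - b \<bullet> ?dK (\<rho> c) (?K (\<rho> a)))) / 2"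
    unfolding schouten_self_def sharp_Pi_chart_at0 D \<rho>_def[symmetric]
    by (simp add: linear_scale[OF linear_kappa_deriv0] field_simps)
  also have "\<dots> = (cartan3 B (kappa_dual B T c) (\<rho> b) (\<rho> a)
      + cartan3 B (kappa_dual B T a) (\<rho> c) (\<rho> b) + cartan3 B (kappa_dual B T b) (\<rho> a) (\<rho> c)) / 2"
    by (simp only: inner_kappa_deriv0_bracket)
  finally show ?thesis
    using cartan3_antisym[of "kappa_dual B T a" "\<rho> c" "\<rho> b"]
      cartan3_antisym[of "kappa_dual B T b" "\<rho> a" "\<rho> c"]
      cartan3_antisym[of "kappa_dual B T c" "\<rho> b" "\<rho> a"]
    by simp
qed

lemma kappa_chart_at0_stabilizer:
  assumes "\<forall>a\<in>L. \<forall>b\<in>L. B a b \<in> L" and "T ` {(x, 0) | x. True} = L" and "l \<in> L"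
  shows "kappa_chart B T l 0 = 0"
proof -
  have "kappa_chart B T l 0 *v x = 0" for x
  proof -
    have "B l (T (x, 0)) \<in> L"
      using assms by blast
    then obtain y where "B l (T (x, 0)) = T (y, 0)"
      using assms(2) by blast
    have "kappa_chart B T l 0 *v x = snd (ad_chart B T l (x, 0))"
      by (simp add: kappa_chart_at0 linear_block_decomposition[OF linear_ad_chart])
    with \<open>B l (T (x, 0)) = T (y, 0)\<close> show ?thesis
      by (simp add: ad_chart_def)
  qed
  then show ?thesis
    by (simp add: matrix_eq)
qed

lemma kappa_dual_mem_lagrangian:
  assumes "lagrangian_subalgebra B L" and "T ` {(x, 0) | x. True} = L"
  shows "kappa_dual B T v \<in> L"
  using assms mem_lagrangian_if_orthogonal[of L "kappa_dual B T v"] kappa_chart_at0_stabilizer[of L]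
  by (simp add: lagrangian_subalgebra_def flip: inner_kappa_chart_at0)

end

theorem theorem2p14:
  fixes B :: "('n::finite) dbl \<Rightarrow> 'n dbl \<Rightarrow> 'n dbl"
    and L :: "'n dbl set"
    and T :: "'n dbl \<Rightarrow> 'n dbl"
  assumes "manin_double B"
    and "lagrangian_subalgebra B L"
    and "grass_chart T L"
  shows "\<forall>\<alpha> \<beta> \<gamma>. schouten_self (Pi_chart B T) 0 \<alpha> \<beta> \<gamma> = 0"
proof (intro allI)
  fix \<alpha> \<beta> \<gamma> :: "real^'n^'n"
  interpret double_chart B T
    using assms(1,3)
    by (simp add: double_chart_def double_chart_axioms_def lie_double_def grass_chart_def)
  have "kappa_dual B T v \<in> L" for v
    using kappa_dual_mem_lagrangian assms(2,3) by (simp add: grass_chart_def)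
  then show "schouten_self (Pi_chart B T) 0 \<alpha> \<beta> \<gamma> = 0"
    unfolding schouten_Pi_chart_at0 using cartan3_reflect_cyclic[OF assms(2)] by simp
qed

end
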